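(* Let $N,n,m,p$ be positive integers, $A\in\mathbb{R}^{n\times n}$, $B\in\mathbb{R}^{n\times p}$, $C\in\mathbb{R}^{m\times n}$, $H\in\mathbb{R}^{n\times m}$, $W=[w_{ij}]\in\mathbb{R}^{N\times N}$ with $w_{ii}=0$ for all $i$, $\Delta=\mathrm{diag}(\delta_1,\dots,\delta_N)$ with $\delta_i\in\{0,1\}$, and $h>0$. Put $\mathcal{B}(h)=\int_0^h e^{A\tau}d\tau\,B$, $\mathcal{H}(h)=\int_0^h e^{A\tau}d\tau\,HC$, $\Phi_s=I_N\otimes e^{Ah}+W\otimes\mathcal{H}(h)$, $\Psi_s=\Delta\otimes\mathcal{B}(h)$. Let $\sigma(W)=\{\lambda_1,\dots,\lambda_r\}$ be the distinct eigenvalues of $W$ and $E_i=e^{Ah}+\lambda_i\mathcal{H}(h)$. Assume $W$ is singular and $0\notin\sigma(E_i)$ for every $i=1,\dots,r$. If the networked sampled-data system $X(k+1)=\Phi_sX(k)+\Psi_sU(k)$ is controllable, then the pair $(e^{Ah},\mathcal{B}(h))$ is controllable.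
   Context: The networked sampled-data system is the discrete-time system $X(k+1)=\Phi_sX(k)+\Psi_sU(k)$; it is called controllable if every initial state can be steered to the origin in finitely many steps. For $F\in\mathbb{C}^{q\times q}$, $G\in\mathbb{C}^{q\times s}$, the pair $(F,G)$ is called controllable if $\mathrm{rank}[sI_q-F,\ G]=q$ for every $s\in\mathbb{C}$. $\sigma(\cdot)$ denotes the set of eigenvalues and $\otimes$ the Kronecker product. *)

theory Defs
  imports "HOL-Analysis.Analysis" "Jordan_Normal_Form.DL_Rank" "Jordan_Normal_Form.Determinant" "Jordan_Normal_Form.Char_Poly"
begin

definition mat_exp :: "real mat \<Rightarrow> real mat" where
  "mat_exp A = mat (dim_row A) (dim_col A)
     (\<lambda>(i,j). \<Sum>k. (A ^\<^sub>m k) $$ (i,j) / fact k)"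

definition int_exp :: "real mat \<Rightarrow> real \<Rightarrow> real mat" where
  "int_exp A h = mat (dim_row A) (dim_col A)
     (\<lambda>(i,j). integral {0..h} (\<lambda>\<tau>. mat_exp (\<tau> \<cdot>\<^sub>m A) $$ (i,j)))"

definition kron :: "'a :: times mat \<Rightarrow> 'a mat \<Rightarrow> 'a mat" where
  "kron P Q = mat (dim_row P * dim_row Q) (dim_col P * dim_col Q)
     (\<lambda>(i,j). P $$ (i div dim_row Q, j div dim_col Q) * Q $$ (i mod dim_row Q, j mod dim_col Q))"

definition diag_of :: "nat \<Rightarrow> (nat \<Rightarrow> 'a :: zero) \<Rightarrow> 'a mat" where
  "diag_of N d = mat N N (\<lambda>(i,j). if i = j then d i else 0)"

definition hcat :: "'a :: zero mat \<Rightarrow> 'a mat \<Rightarrow> 'a mat" where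
  "hcat P Q = four_block_mat P Q (0\<^sub>m 0 (dim_col P)) (0\<^sub>m 0 (dim_col Q))"

definition dt_controllable :: "real mat \<Rightarrow> real mat \<Rightarrow> bool" where
  "dt_controllable Phi Psi \<longleftrightarrow>
     (\<forall>x0 \<in> carrier_vec (dim_row Phi). \<exists>K X U.
        X 0 = x0 \<and>
        (\<forall>k<K. U k \<in> carrier_vec (dim_col Psi) \<and> X (Suc k) = Phi *\<^sub>v X k + Psi *\<^sub>v U k) \<and>
        X K = 0\<^sub>v (dim_row Phi))"

definition pair_controllable :: "complex mat \<Rightarrow> complex mat \<Rightarrow> bool" where
  "pair_controllable F G \<longleftrightarrow>
     (\<forall>s::complex. vec_space.rank (dim_row F) (hcat (s \<cdot>\<^sub>m 1\<^sub>m (dim_row F) - F) G) = dim_row F)"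

abbreviation cmat :: "real mat \<Rightarrow> complex mat" where
  "cmat M \<equiv> map_mat complex_of_real M"

end

theory Submission
  imports Defs
begin

(* If the pair (e^{Ah}, B(h)) failed the rank test at some s, there would be a
  nonzero q with q^T e^{Ah} = s q^T and q^T B(h) = 0.  Tensoring q with a left null
  vector v of the singular matrix W gives a left eigenvector v \<otimes> q of \<Phi>_s for s that
  annihilates \<Psi>_s.  Along every trajectory the linear functional x \<mapsto> (v \<otimes> q)^T x is
  then multiplied by s at each step, whatever the input, so a state on which it is
  nonzero can never be steered to the origin unless s = 0.  But s = 0 is excluded:
  0 is an eigenvalue of W, and E for this eigenvalue is e^{Ah} itself, which is
  therefore nonsingular. *)

unbundle no vec_syntax
unbundle no inner_syntax

lemma mod_less_if_less_mult: "m < a * b \<Longrightarrow> m mod b < (b::nat)"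
  by (cases "b = 0") auto

lemma mult_add_less_mult: "a < r \<Longrightarrow> i < n \<Longrightarrow> a * n + i < r * (n::nat)"
  using mult_le_mono1[of "Suc a" r n] by simp

lemma sum_lessThan_mult_nested:
  fixes g :: "nat \<Rightarrow> 'a::comm_monoid_add"
  shows "(\<Sum>k<N * n. g k) = (\<Sum>a<N. \<Sum>i<n. g (a * n + i))"
proof -
  have "(\<Sum>k<N * n. g k) = (\<Sum>a<N. sum g {a * n..<a * n + n})"
    by (rule sum.nat_group[symmetric])
  also have "\<dots> = (\<Sum>a<N. \<Sum>i<n. g (a * n + i))"
    by (simp add: sum.shift_bounds_nat_ivl[of g 0 _ n, simplified] lessThan_atLeast0 add.commute)
  finally show ?thesis .
qed

definition kron_vec :: "'a :: times vec \<Rightarrow> 'a vec \<Rightarrow> 'a vec" where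
  "kron_vec v w = vec (dim_vec v * dim_vec w) (\<lambda>k. v $ (k div dim_vec w) * w $ (k mod dim_vec w))"

lemma kron_carrier_mat:
  "P \<in> carrier_mat r c \<Longrightarrow> Q \<in> carrier_mat r' c' \<Longrightarrow> kron P Q \<in> carrier_mat (r * r') (c * c')"
  by (simp add: kron_def)

lemma kron_vec_carrier_vec:
  "v \<in> carrier_vec a \<Longrightarrow> w \<in> carrier_vec b \<Longrightarrow> kron_vec v w \<in> carrier_vec (a * b)"
  by (simp add: kron_vec_def)

lemma index_kron_vec:
  "v \<in> carrier_vec a \<Longrightarrow> w \<in> carrier_vec b \<Longrightarrow> i < a \<Longrightarrow> j < b \<Longrightarrow>
    kron_vec v w $ (i * b + j) = v $ i * w $ j"
  by (simp add: kron_vec_def mult_add_less_mult)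

lemma kron_vec_smult_right:
  fixes v w :: "'a :: comm_ring vec"
  shows "kron_vec v (s \<cdot>\<^sub>v w) = s \<cdot>\<^sub>v kron_vec v w"
  by (rule eq_vecI) (auto simp: kron_vec_def less_mult_imp_div_less mod_less_if_less_mult mult_ac)

lemma kron_vec_zero_left [simp]: "kron_vec (0\<^sub>v a) w = (0\<^sub>v (a * dim_vec w) :: 'a :: semiring_0 vec)"
  by (rule eq_vecI) (auto simp: kron_vec_def less_mult_imp_div_less)

lemma kron_vec_zero_right [simp]: "kron_vec v (0\<^sub>v b) = (0\<^sub>v (dim_vec v * b) :: 'a :: semiring_0 vec)"
  by (rule eq_vecI) (auto simp: kron_vec_def mod_less_if_less_mult)

lemma kron_vec_neq_zero:
  fixes v w :: "'a :: semiring_no_zero_divisors vec"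
  assumes "v \<in> carrier_vec a" "v \<noteq> 0\<^sub>v a" "w \<in> carrier_vec b" "w \<noteq> 0\<^sub>v b"
  shows "kron_vec v w \<noteq> 0\<^sub>v (a * b)"
proof -
  obtain i where "i < a" "v $ i \<noteq> 0" using assms(1,2) by (metis carrier_vecD eq_vecI index_zero_vec)
  moreover obtain j where "j < b" "w $ j \<noteq> 0" using assms(3,4) by (metis carrier_vecD eq_vecI index_zero_vec)
  ultimately have "kron_vec v w $ (i * b + j) \<noteq> 0" using assms(1,3) by (simp add: index_kron_vec)
  then show ?thesis using \<open>i < a\<close> \<open>j < b\<close> by (auto simp: mult_add_less_mult)
qed

lemma transpose_kron: "transpose_mat (kron P Q) = kron (transpose_mat P) (transpose_mat Q)"
  by (rule eq_matI) (auto simp: kron_def less_mult_imp_div_less mod_less_if_less_mult)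

lemma kron_mult_kron_vec:
  fixes P Q :: "'a :: comm_semiring_0 mat"
  assumes P: "P \<in> carrier_mat r c" and Q: "Q \<in> carrier_mat r' c'"
    and v: "v \<in> carrier_vec c" and w: "w \<in> carrier_vec c'"
  shows "kron P Q *\<^sub>v kron_vec v w = kron_vec (P *\<^sub>v v) (Q *\<^sub>v w)"
proof (rule eq_vecI)
  fix l assume "l < dim_vec (kron_vec (P *\<^sub>v v) (Q *\<^sub>v w))"
  then have l: "l < r * r'" using P Q by (simp add: kron_vec_def)
  define a i where "a = l div r'" and "i = l mod r'"
  have a: "a < r" and i: "i < r'" and l_eq: "l = a * r' + i"
    using l by (auto simp: a_def i_def less_mult_imp_div_less mod_less_if_less_mult)
  have "(kron P Q *\<^sub>v kron_vec v w) $ l = (\<Sum>k<c * c'. kron P Q $$ (l, k) * kron_vec v w $ k)"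
    using P Q v w l by (simp add: kron_def kron_vec_def scalar_prod_def lessThan_atLeast0)
  also have "\<dots> = (\<Sum>b<c. \<Sum>j<c'. (P $$ (a, b) * v $ b) * (Q $$ (i, j) * w $ j))"
    unfolding sum_lessThan_mult_nested using P Q v w l a i
    by (intro sum.cong refl) (auto simp: kron_def kron_vec_def l_eq mult_add_less_mult mult_ac)
  also have "\<dots> = (P *\<^sub>v v) $ a * (Q *\<^sub>v w) $ i"
    using P Q v w a i by (simp add: sum_product scalar_prod_def lessThan_atLeast0)
  also have "\<dots> = kron_vec (P *\<^sub>v v) (Q *\<^sub>v w) $ l"
    using P Q v w a i by (subst l_eq, subst index_kron_vec[of _ r _ r']) auto
  finally show "(kron P Q *\<^sub>v kron_vec v w) $ l = kron_vec (P *\<^sub>v v) (Q *\<^sub>v w) $ l" .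
qed (use P Q in \<open>simp add: kron_def kron_vec_def\<close>)

lemma (in semiring_hom) mat_hom_kron: "mat\<^sub>h (kron P Q) = kron (mat\<^sub>h P) (mat\<^sub>h Q)"
  by (rule eq_matI) (auto simp: kron_def less_mult_imp_div_less mod_less_if_less_mult hom_mult)

lemma (in semiring_hom) mat_hom_add:
  "A \<in> carrier_mat n k \<Longrightarrow> B \<in> carrier_mat n k \<Longrightarrow> mat\<^sub>h (A + B) = mat\<^sub>h A + mat\<^sub>h B"
  by (rule eq_matI) (auto simp: hom_add)

lemma (in semiring_hom) vec_hom_add:
  "v \<in> carrier_vec n \<Longrightarrow> w \<in> carrier_vec n \<Longrightarrow> vec\<^sub>h (v + w) = vec\<^sub>h v + vec\<^sub>h w"
  by (rule eq_vecI) (auto simp: hom_add)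

lemma rank_eq_if_surjective:
  fixes M :: "'a::field mat"
  assumes M: "M \<in> carrier_mat n k"
    and surj: "\<forall>y\<in>carrier_vec n. \<exists>z\<in>carrier_vec k. M *\<^sub>v z = y"
  shows "vec_space.rank n M = n"
proof -
  interpret vec_space "TYPE('a)" n .
  have cols: "set (cols M) \<subseteq> carrier_vec n" using M cols_dim by blast
  have "carrier_vec n \<subseteq> span (set (cols M))"
  proof
    fix y :: "'a vec" assume "y \<in> carrier_vec n"
    then obtain z where z: "z \<in> carrier_vec k" "M *\<^sub>v z = y" using surj by blast
    have "lincomb_list (\<lambda>j. z $ j) (cols M) = mat_of_cols n (cols M) *\<^sub>v vec (length (cols M)) (\<lambda>j. z $ j)"
      using cols by (intro lincomb_list_as_mat_mult) auto
    also have "\<dots> = M *\<^sub>v z"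
    proof -
      have "mat_of_cols n (cols M) = M" using M by (metis carrier_matD(1) mat_of_cols_cols)
      moreover have "vec (length (cols M)) (\<lambda>j. z $ j) = z" using M z by auto
      ultimately show ?thesis by simp
    qed
    also have "\<dots> = y" by (fact z(2))
    finally have "y \<in> span_list (cols M)" unfolding span_list_def by blast
    then show "y \<in> span (set (cols M))" using span_list_as_span[OF cols] by simp
  qed
  then have "span (set (cols M)) = carrier_vec n" using span_closed[OF cols] by blast
  then have "rank M = vectorspace.dim class_ring (vs (carrier_vec n))" unfolding rank_def by simp
  also have "vs (carrier_vec n) = V" by simp
  finally show ?thesis using dim_is_n by simp
qed

lemma transpose_mult_conjugate_eq_0_if_gram_kernel:
  fixes M :: "'a::conjugatable_ordered_field mat"
  assumes M: "M \<in> carrier_mat n k" and x: "x \<in> carrier_vec n"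
    and ker: "(M * map_mat conjugate (transpose_mat M)) *\<^sub>v x = 0\<^sub>v n"
  shows "transpose_mat M *\<^sub>v conjugate x = 0\<^sub>v k"
proof -
  define y where "y = transpose_mat M *\<^sub>v conjugate x"
  have y: "y \<in> carrier_vec k" using M x by (simp add: y_def)
  have "map_mat conjugate (transpose_mat M) *\<^sub>v x = conjugate y"
    using M x by (intro eq_vecI)
      (auto simp: y_def scalar_prod_def sum_conjugate conjugate_dist_mul)
  then have "M *\<^sub>v conjugate y = 0\<^sub>v n"
    using M x ker by (metis assoc_mult_mat_vec map_carrier_mat transpose_carrier_mat)
  then have "y \<bullet>c y = 0"
    using M x transpose_vec_mult_scalar[of M n k "conjugate y" "conjugate x"]
    by (simp add: y_def)
  then show ?thesis using y by (simp add: y_def)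
qed

lemma left_kernel_if_rank_deficient:
  fixes M :: "'a::conjugatable_ordered_field mat"
  assumes M: "M \<in> carrier_mat n k" and rank: "vec_space.rank n M \<noteq> n"
  shows "\<exists>q\<in>carrier_vec n. q \<noteq> 0\<^sub>v n \<and> transpose_mat M *\<^sub>v q = 0\<^sub>v k"
proof (rule ccontr)
  assume "\<not> ?thesis"
  then have trivial: "q \<in> carrier_vec n \<Longrightarrow> transpose_mat M *\<^sub>v q = 0\<^sub>v k \<Longrightarrow> q = 0\<^sub>v n" for q
    by blast
  define M' where "M' = map_mat conjugate (transpose_mat M)"
  have M': "M' \<in> carrier_mat k n" using M by (simp add: M'_def)
  have gram: "M * M' \<in> carrier_mat n n" using M M' by simp
  have "det (M * M') \<noteq> 0"
  proof
    assume "det (M * M') = 0"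
    then obtain x where x: "x \<in> carrier_vec n" "x \<noteq> 0\<^sub>v n" "(M * M') *\<^sub>v x = 0\<^sub>v n"
      using det_0_iff_vec_prod_zero[OF gram] by blast
    then have "transpose_mat M *\<^sub>v conjugate x = 0\<^sub>v k"
      using M by (intro transpose_mult_conjugate_eq_0_if_gram_kernel) (auto simp: M'_def)
    then show False using trivial[of "conjugate x"] x by simp
  qed
  then obtain Q where Q: "Q \<in> carrier_mat n n" "M * M' * Q = 1\<^sub>m n"
    using det_non_zero_imp_unit[OF gram, of "()"] by (auto simp: Units_def ring_mat_simps)
  have "\<forall>y\<in>carrier_vec n. \<exists>z\<in>carrier_vec k. M *\<^sub>v z = y"
  proof
    fix y :: "'a vec" assume y: "y \<in> carrier_vec n"
    have "M *\<^sub>v (M' *\<^sub>v (Q *\<^sub>v y)) = (M * M') *\<^sub>v (Q *\<^sub>v y)"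
      using assoc_mult_mat_vec[OF M M', of "Q *\<^sub>v y"] Q(1) y by simp
    also have "\<dots> = (M * M' * Q) *\<^sub>v y"
      by (rule assoc_mult_mat_vec[OF gram Q(1) y, symmetric])
    also have "\<dots> = y" using Q(2) y by simp
    finally have "M *\<^sub>v (M' *\<^sub>v (Q *\<^sub>v y)) = y" .
    moreover have "M' *\<^sub>v (Q *\<^sub>v y) \<in> carrier_vec k" using M' Q(1) y by simp
    ultimately show "\<exists>z\<in>carrier_vec k. M *\<^sub>v z = y" by blast
  qed
  with rank show False using rank_eq_if_surjective[OF M] by blast
qed

lemma det_0_iff_transpose_vec_prod_zero:
  fixes A :: "'a :: idom mat"
  assumes "A \<in> carrier_mat n n"
  shows "det A = 0 \<longleftrightarrow> (\<exists>v. v \<in> carrier_vec n \<and> v \<noteq> 0\<^sub>v n \<and> transpose_mat A *\<^sub>v v = 0\<^sub>v n)"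
  using det_0_iff_vec_prod_zero[of "transpose_mat A" n] det_transpose[OF assms] assms by simp

lemma eigenvalue_0_iff_det:
  fixes A :: "'a :: field mat"
  assumes "A \<in> carrier_mat n n"
  shows "eigenvalue A 0 \<longleftrightarrow> det A = 0"
proof -
  have "char_matrix A 0 = A" using assms by (auto simp: char_matrix_def)
  then show ?thesis using eigenvalue_det[OF assms] by simp
qed

lemma hcat_carrier_mat:
  assumes "P \<in> carrier_mat n a" "Q \<in> carrier_mat n b"
  shows "hcat P Q \<in> carrier_mat n (a + b)"
proof -
  have "hcat P Q \<in> carrier_mat (n + 0) (a + b)"
    unfolding hcat_def using assms by (intro four_block_carrier_mat) auto
  then show ?thesis by simp
qed

lemma transpose_hcat_mult_vec:
  assumes P: "P \<in> carrier_mat n a" and Q: "Q \<in> carrier_mat n b" and q: "q \<in> carrier_vec n"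
  shows "transpose_mat (hcat P Q) *\<^sub>v q = (transpose_mat P *\<^sub>v q) @\<^sub>v (transpose_mat Q *\<^sub>v q)"
proof (rule eq_vecI)
  have PQ: "hcat P Q \<in> carrier_mat n (a + b)" using P Q by (rule hcat_carrier_mat)
  fix j assume "j < dim_vec ((transpose_mat P *\<^sub>v q) @\<^sub>v (transpose_mat Q *\<^sub>v q))"
  then have j: "j < a + b" using P Q by simp
  have "(transpose_mat (hcat P Q) *\<^sub>v q) $ j = (\<Sum>i<n. hcat P Q $$ (i, j) * q $ i)"
    using PQ q j by (simp add: scalar_prod_def lessThan_atLeast0 mult.commute)
  also have "\<dots> = (if j < a then \<Sum>i<n. P $$ (i, j) * q $ i else \<Sum>i<n. Q $$ (i, j - a) * q $ i)"
    using P Q j by (auto simp: hcat_def intro!: sum.cong)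
  also have "\<dots> = ((transpose_mat P *\<^sub>v q) @\<^sub>v (transpose_mat Q *\<^sub>v q)) $ j"
    using P Q q j by (simp add: scalar_prod_def lessThan_atLeast0 mult.commute)
  finally show "(transpose_mat (hcat P Q) *\<^sub>v q) $ j = ((transpose_mat P *\<^sub>v q) @\<^sub>v (transpose_mat Q *\<^sub>v q)) $ j" .
qed (use P Q hcat_carrier_mat[OF P Q] in simp)

lemma left_eigenvector_if_not_pair_controllable:
  fixes F G :: "complex mat"
  assumes F: "F \<in> carrier_mat n n" and G: "G \<in> carrier_mat n p"
    and "\<not> pair_controllable F G"
  obtains s q where "q \<in> carrier_vec n" "q \<noteq> 0\<^sub>v n"
    "transpose_mat F *\<^sub>v q = s \<cdot>\<^sub>v q" "transpose_mat G *\<^sub>v q = 0\<^sub>v p"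
proof -
  obtain s where rank: "vec_space.rank n (hcat (s \<cdot>\<^sub>m 1\<^sub>m n - F) G) \<noteq> n"
    using assms(3) F by (auto simp: pair_controllable_def)
  define S where "S = s \<cdot>\<^sub>m 1\<^sub>m n - F"
  have S: "S \<in> carrier_mat n n" unfolding S_def using F by (intro minus_carrier_mat) auto
  obtain q where q: "q \<in> carrier_vec n" "q \<noteq> 0\<^sub>v n" "transpose_mat (hcat S G) *\<^sub>v q = 0\<^sub>v (n + p)"
    using left_kernel_if_rank_deficient[OF hcat_carrier_mat[OF S G]] rank by (auto simp: S_def)
  have "0\<^sub>v (n + p) = 0\<^sub>v n @\<^sub>v (0\<^sub>v p :: complex vec)" by (rule eq_vecI) auto
  then have "(transpose_mat S *\<^sub>v q) @\<^sub>v (transpose_mat G *\<^sub>v q) = 0\<^sub>v n @\<^sub>v 0\<^sub>v p"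
    using q(3) transpose_hcat_mult_vec[OF S G q(1)] by simp
  then have "transpose_mat S *\<^sub>v q = 0\<^sub>v n \<and> transpose_mat G *\<^sub>v q = 0\<^sub>v p"
    using append_vec_eq[of "transpose_mat S *\<^sub>v q" n "0\<^sub>v n"] S q(1) by simp
  then have S_q: "transpose_mat S *\<^sub>v q = 0\<^sub>v n" and G_q: "transpose_mat G *\<^sub>v q = 0\<^sub>v p"
    by auto
  have "transpose_mat F *\<^sub>v q = s \<cdot>\<^sub>v q"
  proof (rule eq_vecI)
    fix i assume "i < dim_vec (s \<cdot>\<^sub>v q)"
    then have "i < n" using q(1) by simp
    have "(transpose_mat S *\<^sub>v q) $ i
        = (\<Sum>j<n. s * (if j = i then 1 else 0) * q $ j) - (\<Sum>j<n. F $$ (j, i) * q $ j)"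
      using F q(1) \<open>i < n\<close>
      by (simp add: S_def scalar_prod_def lessThan_atLeast0 left_diff_distrib sum_subtractf)
    also have "(\<Sum>j<n. s * (if j = i then 1 else 0) * q $ j) = (\<Sum>j<n. if j = i then s * q $ i else 0)"
      by (intro sum.cong) auto
    also have "\<dots> = s * q $ i" using \<open>i < n\<close> by simp
    also have "(\<Sum>j<n. F $$ (j, i) * q $ j) = (transpose_mat F *\<^sub>v q) $ i"
      using F q(1) \<open>i < n\<close> by (simp add: scalar_prod_def lessThan_atLeast0 mult.commute)
    finally have "(transpose_mat S *\<^sub>v q) $ i = s * q $ i - (transpose_mat F *\<^sub>v q) $ i" .
    then show "(transpose_mat F *\<^sub>v q) $ i = (s \<cdot>\<^sub>v q) $ i" using S_q \<open>i < n\<close> q(1) by simp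
  qed (use F q(1) in simp)
  then show thesis using q(1,2) G_q by (intro that)
qed

abbreviation cvec :: "real vec \<Rightarrow> complex vec" where
  "cvec v \<equiv> Matrix.map_vec complex_of_real v"

lemma not_dt_controllable_if_left_eigenvector:
  assumes Phi: "Phi \<in> carrier_mat d d" and Psi: "Psi \<in> carrier_mat d r"
    and w: "w \<in> carrier_vec d" "w \<noteq> 0\<^sub>v d" and "s \<noteq> 0"
    and Phi_w: "transpose_mat (cmat Phi) *\<^sub>v w = s \<cdot>\<^sub>v w"
    and Psi_w: "transpose_mat (cmat Psi) *\<^sub>v w = 0\<^sub>v r"
  shows "\<not> dt_controllable Phi Psi"
proof
  assume "dt_controllable Phi Psi"
  define f where "f x = w \<bullet> cvec x" for x
  have f_step: "f (Phi *\<^sub>v x + Psi *\<^sub>v u) = s * f x"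
    if x: "x \<in> carrier_vec d" and u: "u \<in> carrier_vec r" for x u
  proof -
    have "cvec (Phi *\<^sub>v x + Psi *\<^sub>v u) = cmat Phi *\<^sub>v cvec x + cmat Psi *\<^sub>v cvec u"
      using Phi Psi x u
      by (simp add: of_real_hom.vec_hom_add[of _ d] of_real_hom.mult_mat_vec_hom[symmetric])
    then have "f (Phi *\<^sub>v x + Psi *\<^sub>v u) = w \<bullet> (cmat Phi *\<^sub>v cvec x) + w \<bullet> (cmat Psi *\<^sub>v cvec u)"
      using Phi Psi x u w(1) by (simp add: f_def scalar_prod_add_distrib[of _ d])
    also have "\<dots> = (s \<cdot>\<^sub>v w) \<bullet> cvec x + 0\<^sub>v r \<bullet> cvec u"
      using Phi Psi x u w(1)
      by (simp add: transpose_vec_mult_scalar[symmetric] Phi_w Psi_w)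
    also have "\<dots> = s * f x" using x u w(1) by (simp add: f_def)
    finally show ?thesis .
  qed
  obtain l where l: "l < d" "w $ l \<noteq> 0" using w by (metis carrier_vecD eq_vecI index_zero_vec)
  have "unit_vec d l \<in> carrier_vec d" by simp
  moreover have "dim_row Phi = d" "dim_col Psi = r" using Phi Psi by auto
  ultimately obtain K X U where X0: "X 0 = unit_vec d l"
    and step: "\<And>k. k < K \<Longrightarrow> U k \<in> carrier_vec r \<and> X (Suc k) = Phi *\<^sub>v X k + Psi *\<^sub>v U k"
    and XK: "X K = 0\<^sub>v d"
    using \<open>dt_controllable Phi Psi\<close> unfolding dt_controllable_def by blast
  have "X k \<in> carrier_vec d \<and> f (X k) = s ^ k * w $ l" if "k \<le> K" for k
    using that
  proof (induction k)
    case 0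
    have "cvec (unit_vec d l) = unit_vec d l" by (rule eq_vecI) (auto simp: unit_vec_def)
    then show ?case using X0 l w(1) by (simp add: f_def)
  next
    case (Suc k)
    then have "X k \<in> carrier_vec d" "f (X k) = s ^ k * w $ l"
      "U k \<in> carrier_vec r" "X (Suc k) = Phi *\<^sub>v X k + Psi *\<^sub>v U k"
      using step by auto
    then show ?case using Phi Psi f_step by simp
  qed
  then have "f (X K) = s ^ K * w $ l" by simp
  moreover have "f (X K) = 0" using XK w(1) by (simp add: f_def of_real_hom.vec_hom_zero)
  ultimately have "s ^ K * w $ l = 0" by simp
  with \<open>s \<noteq> 0\<close> l(2) show False by simp
qed

lemma transpose_network_mult_kron_vec:
  fixes F M W :: "'a :: comm_ring_1 mat"
  assumes F: "F \<in> carrier_mat n n" and M: "M \<in> carrier_mat n n" and W: "W \<in> carrier_mat N N"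
    and v: "v \<in> carrier_vec N" and q: "q \<in> carrier_vec n"
    and W_v: "transpose_mat W *\<^sub>v v = 0\<^sub>v N" and F_q: "transpose_mat F *\<^sub>v q = s \<cdot>\<^sub>v q"
  shows "transpose_mat (kron (1\<^sub>m N) F + kron W M) *\<^sub>v kron_vec v q = s \<cdot>\<^sub>v kron_vec v q"
proof -
  have "transpose_mat (kron (1\<^sub>m N) F + kron W M)
      = kron (1\<^sub>m N) (transpose_mat F) + kron (transpose_mat W) (transpose_mat M)"
    using F M W by (simp add: transpose_add[of _ "N * n" "N * n"] kron_carrier_mat transpose_kron)
  then have "transpose_mat (kron (1\<^sub>m N) F + kron W M) *\<^sub>v kron_vec v q
      = kron_vec v (transpose_mat F *\<^sub>v q) + kron_vec (transpose_mat W *\<^sub>v v) (transpose_mat M *\<^sub>v q)"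
    using F M W v q
    by (simp add: add_mult_distrib_mat_vec[of _ "N * n" "N * n"] kron_carrier_mat
        kron_vec_carrier_vec kron_mult_kron_vec[of _ N N _ n n])
  also have "\<dots> = s \<cdot>\<^sub>v kron_vec v q"
    using M v q by (simp add: W_v F_q kron_vec_smult_right kron_vec_carrier_vec)
  finally show ?thesis .
qed

lemma pair_controllable_if_network_controllable:
  fixes F M G W D :: "real mat"
  assumes F: "F \<in> carrier_mat n n" and M: "M \<in> carrier_mat n n" and G: "G \<in> carrier_mat n p"
    and W: "W \<in> carrier_mat N N" and D: "D \<in> carrier_mat N N"
    and "det W = 0" and "det F \<noteq> 0"
    and ctrl: "dt_controllable (kron (1\<^sub>m N) F + kron W M) (kron D G)"
  shows "pair_controllable (cmat F) (cmat G)"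
proof (rule ccontr)
  assume "\<not> pair_controllable (cmat F) (cmat G)"
  moreover have "cmat F \<in> carrier_mat n n" "cmat G \<in> carrier_mat n p" using F G by auto
  ultimately obtain s q where q: "q \<in> carrier_vec n" "q \<noteq> 0\<^sub>v n"
    and F_q: "transpose_mat (cmat F) *\<^sub>v q = s \<cdot>\<^sub>v q"
    and G_q: "transpose_mat (cmat G) *\<^sub>v q = 0\<^sub>v p"
    using left_eigenvector_if_not_pair_controllable by metis
  have "s \<noteq> 0"
  proof
    assume "s = 0"
    then have "transpose_mat (cmat F) *\<^sub>v q = 0\<^sub>v n" using F_q q(1) by auto
    then have "det (cmat F) = 0"
      using F q det_0_iff_transpose_vec_prod_zero[of "cmat F" n] by auto
    with \<open>det F \<noteq> 0\<close> show False by simp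
  qed
  have "det (cmat W) = 0" using \<open>det W = 0\<close> by simp
  then obtain v where v: "v \<in> carrier_vec N" "v \<noteq> 0\<^sub>v N" and W_v: "transpose_mat (cmat W) *\<^sub>v v = 0\<^sub>v N"
    using W det_0_iff_transpose_vec_prod_zero[of "cmat W" N] by auto
  have "cmat (kron (1\<^sub>m N) F + kron W M) = kron (1\<^sub>m N) (cmat F) + kron (cmat W) (cmat M)"
    using F M W by (simp add: of_real_hom.mat_hom_add[of _ "N * n" "N * n"] kron_carrier_mat
        of_real_hom.mat_hom_kron of_real_hom.mat_hom_one)
  then have "transpose_mat (cmat (kron (1\<^sub>m N) F + kron W M)) *\<^sub>v kron_vec v q = s \<cdot>\<^sub>v kron_vec v q"
    using F M W v q W_v F_q by (simp add: transpose_network_mult_kron_vec)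
  moreover have "transpose_mat (cmat (kron D G)) *\<^sub>v kron_vec v q = 0\<^sub>v (N * p)"
    using D G v q G_q
    by (simp add: of_real_hom.mat_hom_kron transpose_kron kron_mult_kron_vec[of _ N N _ p n])
  moreover have "kron_vec v q \<in> carrier_vec (N * n)" "kron_vec v q \<noteq> 0\<^sub>v (N * n)"
    using v q by (simp_all add: kron_vec_carrier_vec kron_vec_neq_zero)
  ultimately have "\<not> dt_controllable (kron (1\<^sub>m N) F + kron W M) (kron D G)"
    using F M W D G \<open>s \<noteq> 0\<close>
    by (intro not_dt_controllable_if_left_eigenvector) (auto simp: kron_carrier_mat)
  with ctrl show False by contradiction
qed

theorem corollary3:
  fixes N n m p :: nat
    and A B C H W :: "real mat"
    and \<delta> :: "nat \<Rightarrow> real"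
    and h :: real
  assumes "N > 0" "n > 0" "m > 0" "p > 0"
    and "A \<in> carrier_mat n n" "B \<in> carrier_mat n p" "C \<in> carrier_mat m n"
    and "H \<in> carrier_mat n m" "W \<in> carrier_mat N N"
    and "\<forall>i<N. W $$ (i,i) = 0"
    and "\<forall>i<N. \<delta> i \<in> {0,1}"
    and "h > 0"
    and "det W = 0"
    and "\<forall>lam. eigenvalue (cmat W) lam \<longrightarrow>
           \<not> eigenvalue (cmat (mat_exp (h \<cdot>\<^sub>m A)) + lam \<cdot>\<^sub>m cmat (int_exp A h * (H * C))) 0"
    and "dt_controllable
           (kron (1\<^sub>m N) (mat_exp (h \<cdot>\<^sub>m A)) + kron W (int_exp A h * (H * C)))
           (kron (diag_of N \<delta>) (int_exp A h * B))"
  shows "pair_controllable (cmat (mat_exp (h \<cdot>\<^sub>m A))) (cmat (int_exp A h * B))"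
proof -
  note A = assms(5) and W = assms(9) and W_singular = assms(13)
  define F where "F = mat_exp (h \<cdot>\<^sub>m A)"
  define M where "M = int_exp A h * (H * C)"
  define G where "G = int_exp A h * B"
  have int_exp: "int_exp A h \<in> carrier_mat n n" using A by (simp add: int_exp_def)
  have F: "F \<in> carrier_mat n n" using A by (simp add: F_def mat_exp_def)
  have M: "M \<in> carrier_mat n n" using int_exp assms(7,8) by (simp add: M_def)
  have G: "G \<in> carrier_mat n p" using int_exp assms(6) by (simp add: G_def)
  have D: "diag_of N \<delta> \<in> carrier_mat N N" by (simp add: diag_of_def)
  have "eigenvalue (cmat W) 0"
    using W W_singular by (simp add: eigenvalue_0_iff_det[of _ N])
  then have "\<not> eigenvalue (cmat F + 0 \<cdot>\<^sub>m cmat M) 0" using assms(14) by (simp add: F_def M_def)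
  moreover have "cmat F + 0 \<cdot>\<^sub>m cmat M = cmat F" using F M by auto
  ultimately have "det F \<noteq> 0"
    using F by (simp add: eigenvalue_0_iff_det[of _ n])
  moreover have "dt_controllable (kron (1\<^sub>m N) F + kron W M) (kron (diag_of N \<delta>) G)"
    using assms(15) by (simp add: F_def M_def G_def)
  ultimately show ?thesis
    using pair_controllable_if_network_controllable[OF F M G W D W_singular] by (simp add: F_def G_def)
qed

end
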